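(* Let $l\ge2$, $d\ge2$ and $X=X_{l,d}$. Under the action of the torus $T$ on $\mathbb{T}^1=\mathrm{Ext}^1(\Omega^1_X,\mathcal{O}_X)$, with character group identified with $M_0=\{u\in M:\deg(u)=0\}$, one has the weight decomposition $\mathbb{T}^1=\bigoplus_{u\in\Phi}\mathbb{T}^1_u$ with $\dim\mathbb{T}^1_u=1$ for every $u\in\Phi$, where $\Psi=\{u\in M_0:u+\epsilon\in\sigma^\vee\}$ and $\Phi=\Psi\setminus\{e_{ij}-e_{i'j'}:1\le i,i'\le l,\ 1\le j,j'\le d\}$.
   Context: $X_{l,d}=\{x_{11}\cdots x_{1d}+\dots+x_{l1}\cdots x_{ld}=0\}\subset\mathbb{P}^{ld-1}$. $\mathbf{Z}^{ld}$ has basis $e_{ij}$, $\epsilon_i=\sum_je_{ij}$, $M=\mathbf{Z}^{ld}/\langle\epsilon_1-\epsilon_2,\dots,\epsilon_1-\epsilon_l\rangle$ with images $e_{ij}$ and $\epsilon=\epsilon_1=\dots=\epsilon_l$; $\deg\colon M\to\mathbf{Z}$, $e_{ij}\mapsto1$; $\sigma^\vee$ is the cone in $M_\mathbf{R}$ generated by the $e_{ij}$. $\widetilde T=\{\mathrm{diag}(\lambda_{ij}):\prod_j\lambda_{1j}=\dots=\prod_j\lambda_{lj}\}\cong\mathrm{Spec}\,\mathbf{C}[M]$ (character $e_{ij}\leftrightarrow\lambda_{ij}$), $T=\widetilde T/\mathbf{C}^*$ with character group $M_0$. $T$ acts on $\mathbb{T}^1$, identified with $\mathbf{C}[x_{ij}]_d/\mathrm{span}\langle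 x_{i'j'}\prod_{k\ne j}x_{ik}\rangle$, by $\lambda\cdot g(x)=g(\lambda\cdot x)/(\lambda_{11}\cdots\lambda_{1d})$. *)

theory Defs
  imports Complex_Main "HOL-Library.Function_Algebras"
begin

definition idx :: "nat \<Rightarrow> nat \<Rightarrow> (nat \<times> nat) set" where
  "idx l d = {1..l} \<times> {1..d}"

text \<open>Z^{ld}: integer vectors supported on idx.\<close>
definition Zvec :: "nat \<Rightarrow> nat \<Rightarrow> (nat \<times> nat \<Rightarrow> int) set" where
  "Zvec l d = {v. \<forall>p. p \<notin> idx l d \<longrightarrow> v p = 0}"

text \<open>Basis vector e_ij and eps_i = sum_j e_ij (as real/int-valued functions).\<close>
definition ebas :: "nat \<Rightarrow> nat \<Rightarrow> nat \<times> nat \<Rightarrow> int" where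
  "ebas i j = (\<lambda>p. if p = (i, j) then 1 else 0)"

definition epsv :: "nat \<Rightarrow> nat \<Rightarrow> nat \<times> nat \<Rightarrow> int" where
  "epsv d i = (\<lambda>(a, b). if a = i \<and> b \<in> {1..d} then 1 else 0)"

text \<open>Equality in M = Z^{ld} / <eps_1 - eps_2, ..., eps_1 - eps_l> of the classes of two
  representatives.\<close>
definition Meq :: "nat \<Rightarrow> nat \<Rightarrow> (nat \<times> nat \<Rightarrow> int) \<Rightarrow> (nat \<times> nat \<Rightarrow> int) \<Rightarrow> bool" where
  "Meq l d v w \<longleftrightarrow> (\<exists>c :: nat \<Rightarrow> int. \<forall>p \<in> idx l d.
      v p - w p = (\<Sum>k\<in>{2..l}. c k * (epsv d 1 p - epsv d k p)))"

definition degM :: "nat \<Rightarrow> nat \<Rightarrow> (nat \<times> nat \<Rightarrow> int) \<Rightarrow> int" where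
  "degM l d v = (\<Sum>p\<in>idx l d. v p)"

text \<open>Membership of the class of u in sigma-dual, the cone in M_R generated by the e_ij:
  u = sum c_ij e_ij in M_R with c_ij >= 0, i.e. modulo the real span of eps_1 - eps_k.\<close>
definition in_sigma_dual :: "nat \<Rightarrow> nat \<Rightarrow> (nat \<times> nat \<Rightarrow> int) \<Rightarrow> bool" where
  "in_sigma_dual l d u \<longleftrightarrow> (\<exists>c :: nat \<times> nat \<Rightarrow> real. (\<forall>p \<in> idx l d. c p \<ge> 0) \<and>
      (\<exists>r :: nat \<Rightarrow> real. \<forall>p \<in> idx l d.
         real_of_int (u p) - c p = (\<Sum>k\<in>{2..l}. r k * real_of_int (epsv d 1 p - epsv d k p))))"

text \<open>Psi = {u in M_0 : u + eps in sigma-dual} (on representatives u in Z^{ld}).\<close>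
definition inPsi :: "nat \<Rightarrow> nat \<Rightarrow> (nat \<times> nat \<Rightarrow> int) \<Rightarrow> bool" where
  "inPsi l d u \<longleftrightarrow> u \<in> Zvec l d \<and> degM l d u = 0 \<and>
      in_sigma_dual l d (\<lambda>p. u p + epsv d 1 p)"

definition inPhi :: "nat \<Rightarrow> nat \<Rightarrow> (nat \<times> nat \<Rightarrow> int) \<Rightarrow> bool" where
  "inPhi l d u \<longleftrightarrow> inPsi l d u \<and>
     \<not> (\<exists>i\<in>{1..l}. \<exists>j\<in>{1..d}. \<exists>i'\<in>{1..l}. \<exists>j'\<in>{1..d}.
          Meq l d u (\<lambda>p. ebas i j p - ebas i' j' p))"

text \<open>Polynomials in the variables x_ij, represented by their coefficient functions on
  exponent vectors (nat x nat => nat).  Complex vector space structure: pointwise.\<close>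
type_synonym expo = "nat \<times> nat \<Rightarrow> nat"
type_synonym cpoly = "expo \<Rightarrow> complex"

definition sc :: "complex \<Rightarrow> cpoly \<Rightarrow> cpoly" where
  "sc c g = (\<lambda>a. c * g a)"

definition mons :: "nat \<Rightarrow> nat \<Rightarrow> expo set" where
  "mons l d = {a. (\<forall>p. p \<notin> idx l d \<longrightarrow> a p = 0) \<and> (\<Sum>p\<in>idx l d. a p) = d}"

definition Pd :: "nat \<Rightarrow> nat \<Rightarrow> cpoly set" where
  "Pd l d = {g. \<forall>a. g a \<noteq> 0 \<longrightarrow> a \<in> mons l d}"

definition monomial :: "expo \<Rightarrow> cpoly" where
  "monomial a = (\<lambda>b. if b = a then 1 else 0)"

definition relexp :: "nat \<Rightarrow> nat \<Rightarrow> nat \<Rightarrow> nat \<Rightarrow> nat \<Rightarrow> expo" where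
  "relexp d i j i' j' = (\<lambda>p. (if p = (i', j') then 1 else 0)
       + (if fst p = i \<and> snd p \<in> {1..d} - {j} then 1 else 0))"

definition Rel :: "nat \<Rightarrow> nat \<Rightarrow> cpoly set" where
  "Rel l d = module.span sc
     {monomial (relexp d i j i' j') | i j i' j'.
        i \<in> {1..l} \<and> j \<in> {1..d} \<and> i' \<in> {1..l} \<and> j' \<in> {1..d}}"

text \<open>The torus T-tilde (points are diagonal matrices, given by their entries lambda_ij).\<close>
definition Ttil :: "nat \<Rightarrow> nat \<Rightarrow> (nat \<times> nat \<Rightarrow> complex) set" where
  "Ttil l d = {lam. (\<forall>p\<in>idx l d. lam p \<noteq> 0) \<and>
      (\<forall>i\<in>{1..l}. (\<Prod>j\<in>{1..d}. lam (i, j)) = (\<Prod>j\<in>{1..d}. lam (1, j)))}"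

text \<open>The action lam . g(x) = g(lam . x) / (lam_11 ... lam_1d), written on coefficients:
  the monomial x^a is sent to lam^a x^a / (lam_11 ... lam_1d).\<close>
definition act :: "nat \<Rightarrow> nat \<Rightarrow> (nat \<times> nat \<Rightarrow> complex) \<Rightarrow> cpoly \<Rightarrow> cpoly" where
  "act l d lam g = (\<lambda>a. g a * (\<Prod>p\<in>idx l d. lam p ^ a p) / (\<Prod>j\<in>{1..d}. lam (1, j)))"

definition chi :: "nat \<Rightarrow> nat \<Rightarrow> (nat \<times> nat \<Rightarrow> int) \<Rightarrow> (nat \<times> nat \<Rightarrow> complex) \<Rightarrow> complex" where
  "chi l d u lam = (\<Prod>p\<in>idx l d. lam p powi u p)"

text \<open>Preimage in C[x]_d of the weight space T^1_u of T^1 = C[x]_d / Rel.\<close>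
definition wpre :: "nat \<Rightarrow> nat \<Rightarrow> (nat \<times> nat \<Rightarrow> int) \<Rightarrow> cpoly set" where
  "wpre l d u = {g \<in> Pd l d. \<forall>lam \<in> Ttil l d.
      act l d lam g - sc (chi l d u lam) g \<in> Rel l d}"

text \<open>dim T^1_u = dim (wpre u / Rel) = dim (wpre u) - dim Rel (finite dimensional).\<close>
definition dimT1w :: "nat \<Rightarrow> nat \<Rightarrow> (nat \<times> nat \<Rightarrow> int) \<Rightarrow> nat" where
  "dimT1w l d u = vector_space.dim sc (wpre l d u) - vector_space.dim sc (Rel l d)"

end

(*
  The torus acts diagonally on monomials: x^a has weight a - eps_1 in M, and the characters
  of T separate the points of M. Hence T^1_u is spanned by the monomials of weight u that
  are not relation monomials x_i'j' * prod_{k ~= j} x_ik. Two distinct monomials of degree d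
  with the same weight differ by sum_i s_i eps_i with sum_i s_i = 0 and some s_i > 0, so the
  first is divisible by x_i1 ... x_id and is therefore itself a relation monomial: every
  weight space has dimension at most one. A weight u of degree 0 is carried by some monomial
  iff u + eps_1 is a lattice point of sigma-dual (the e_ij generate its lattice points, by
  rounding a real solution), and this monomial avoids the relations iff u is not of the form
  e_ij - e_i'j', since that is exactly the weight of a relation monomial.
*)

theory Submission
  imports Defs
begin

section \<open>Polynomials supported on a set of exponents\<close>

interpretation vs: vector_space sc
  by unfold_locales (auto simp: sc_def fun_eq_iff algebra_simps)

lemma sum_fun_apply: "(\<Sum>a\<in>S. f a) x = (\<Sum>a\<in>S. f a x)"
  for f :: "'b \<Rightarrow> 'c \<Rightarrow> 'd::comm_monoid_add"
  by (induction S rule: infinite_finite_induct) auto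

definition supported_on :: "expo set \<Rightarrow> cpoly set" where
  "supported_on S = {g. \<forall>a. g a \<noteq> 0 \<longrightarrow> a \<in> S}"

lemma subspace_supported_on: "vs.subspace (supported_on S)"
  unfolding vs.subspace_def supported_on_def sc_def
  by (auto, metis add.right_neutral)

lemma span_monomials:
  assumes "finite S"
  shows "vs.span (monomial ` S) = supported_on S"
proof
  show "vs.span (monomial ` S) \<subseteq> supported_on S"
    by (rule vs.span_minimal[OF _ subspace_supported_on])
      (auto simp: supported_on_def monomial_def split: if_splits)
  show "supported_on S \<subseteq> vs.span (monomial ` S)"
  proof
    fix g assume g: "g \<in> supported_on S"
    have "g = (\<Sum>a\<in>S. sc (g a) (monomial a))"
    proof
      fix b
      have "(\<Sum>a\<in>S. sc (g a) (monomial a)) b = (\<Sum>a\<in>S. if b = a then g a else 0)"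
        by (simp add: sum_fun_apply sc_def monomial_def) (rule sum.cong, auto)
      also have "\<dots> = g b" using g assms by (auto simp: supported_on_def)
      finally show "g b = (\<Sum>a\<in>S. sc (g a) (monomial a)) b" by simp
    qed
    also have "\<dots> \<in> vs.span (monomial ` S)"
      by (intro vs.span_sum vs.span_scale vs.span_base) auto
    finally show "g \<in> vs.span (monomial ` S)" .
  qed
qed

lemma inj_monomial: "inj monomial"
  by (auto simp: inj_def monomial_def fun_eq_iff split: if_splits)

lemma independent_monomials: "vs.independent (monomial ` S)"
  unfolding vs.independent_explicit_module
proof (intro allI impI)
  fix t u v
  assume t: "finite t" "t \<subseteq> monomial ` S" and s: "(\<Sum>v\<in>t. sc (u v) v) = 0" and v: "v \<in> t"
  then obtain a where a: "v = monomial a" by auto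
  have "0 = (\<Sum>w\<in>t. u w * w a)"
    using fun_cong[OF s, of a] by (simp add: sum_fun_apply sc_def)
  also have "\<dots> = (\<Sum>w\<in>t. if w = v then u v else 0)"
  proof (rule sum.cong)
    fix w assume "w \<in> t"
    then obtain b where b: "w = monomial b" using t by auto
    show "u w * w a = (if w = v then u v else 0)"
      using a b by (cases "a = b") (simp, auto simp: monomial_def fun_eq_iff)
  qed simp
  also have "\<dots> = u v" using t v by simp
  finally show "u v = 0" by simp
qed

lemma dim_supported_on:
  assumes "finite S"
  shows "vs.dim (supported_on S) = card S"
proof -
  have "vs.dim (supported_on S) = card (monomial ` S)"
    unfolding span_monomials[OF assms, symmetric]
    by (rule vs.dim_span_eq_card_independent[OF independent_monomials])
  also have "\<dots> = card S" by (rule card_image) (meson inj_monomial inj_on_subset subset_UNIV)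
  finally show ?thesis .
qed

lemma idx_iff: "(i, j) \<in> idx l d \<longleftrightarrow> i \<in> {1..l} \<and> j \<in> {1..d}"
  by (simp add: idx_def)

lemma finite_idx: "finite (idx l d)"
  by (simp add: idx_def)

lemma sum_idx: "(\<Sum>p\<in>idx l d. g p) = (\<Sum>i\<in>{1..l}. \<Sum>j\<in>{1..d}. g (i, j))"
  unfolding idx_def by (simp add: sum.cartesian_product)

lemma prod_idx: "(\<Prod>p\<in>idx l d. g p) = (\<Prod>i\<in>{1..l}. \<Prod>j\<in>{1..d}. g (i, j))"
  unfolding idx_def by (simp add: prod.cartesian_product)

lemma sum_atLeast1_atMost_split: "(l::nat) \<ge> 1 \<Longrightarrow> (\<Sum>i\<in>{1..l}. f i) = f 1 + (\<Sum>i\<in>{2..l}. f i)"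
  using sum.atLeast_Suc_atMost[of 1 l f] by (simp add: numeral_2_eq_2)

lemma finite_mons: "finite (mons l d)"
proof -
  have "mons l d \<subseteq> {f. \<forall>x. (x \<in> idx l d \<longrightarrow> f x \<in> {0..d}) \<and> (x \<notin> idx l d \<longrightarrow> f x = 0)}"
  proof safe
    fix a x assume a: "a \<in> mons l d" and x: "x \<in> idx l d"
    have "a x \<le> (\<Sum>p\<in>idx l d. a p)" by (rule member_le_sum) (use x finite_idx in auto)
    then show "a x \<in> {0..d}" using a by (auto simp: mons_def)
  qed (auto simp: mons_def)
  then show ?thesis
    by (rule finite_subset) (intro finite_set_of_finite_funs finite_idx, simp)
qed

lemma Pd_eq: "Pd l d = supported_on (mons l d)"
  by (auto simp: Pd_def supported_on_def)

section \<open>The lattice M\<close>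

text \<open>On idx, f is \<open>\<Sum>\<^sub>i s\<^sub>i \<epsilon>\<^sub>i\<close> with \<open>\<Sum>\<^sub>i s\<^sub>i = 0\<close>, i.e. f lies in the span of the
  \<open>\<epsilon>\<^sub>1 - \<epsilon>\<^sub>k\<close>.\<close>
definition eps_span :: "nat \<Rightarrow> nat \<Rightarrow> (nat \<times> nat \<Rightarrow> 'a::comm_ring_1) \<Rightarrow> bool" where
  "eps_span l d f \<longleftrightarrow> (\<exists>s. (\<forall>i\<in>{1..l}. \<forall>j\<in>{1..d}. f (i, j) = s i) \<and> (\<Sum>i\<in>{1..l}. s i) = 0)"

lemma eps_diff_comb_apply:
  fixes r :: "nat \<Rightarrow> 'a::comm_ring_1"
  assumes "i \<in> {1..l}" "j \<in> {1..d}"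
  shows "(\<Sum>k\<in>{2..l}. r k * of_int (epsv d 1 (i, j) - epsv d k (i, j)))
       = (if i = 1 then (\<Sum>k\<in>{2..l}. r k) else - r i)"
proof -
  have "(\<Sum>k\<in>{2..l}. r k * of_int (epsv d 1 (i, j) - epsv d k (i, j)))
      = (\<Sum>k\<in>{2..l}. (if i = 1 then r k else 0) - (if k = i then r k else 0))"
    using assms by (intro sum.cong) (auto simp: epsv_def)
  also have "\<dots> = (if i = 1 then (\<Sum>k\<in>{2..l}. r k) else 0) - (if i \<in> {2..l} then r i else 0)"
    by (simp add: sum_subtractf)
  also have "\<dots> = (if i = 1 then (\<Sum>k\<in>{2..l}. r k) else - r i)"
    using assms by auto
  finally show ?thesis .
qed

lemma eps_span_iff_comb:
  fixes f :: "nat \<times> nat \<Rightarrow> 'a::comm_ring_1"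
  assumes "l \<ge> 1"
  shows "eps_span l d f \<longleftrightarrow>
    (\<exists>r. \<forall>p\<in>idx l d. f p = (\<Sum>k\<in>{2..l}. r k * of_int (epsv d 1 p - epsv d k p)))"
proof
  assume "eps_span l d f"
  then obtain s where s: "\<forall>i\<in>{1..l}. \<forall>j\<in>{1..d}. f (i, j) = s i" and "(\<Sum>i\<in>{1..l}. s i) = 0"
    by (auto simp: eps_span_def)
  then have "s 1 = (\<Sum>k\<in>{2..l}. - s k)"
    using sum_atLeast1_atMost_split[OF assms, of s] by (simp add: sum_negf eq_neg_iff_add_eq_0)
  then have "\<forall>p\<in>idx l d. f p = (\<Sum>k\<in>{2..l}. - s k * of_int (epsv d 1 p - epsv d k p))"
    using s eps_diff_comb_apply[where r = "\<lambda>k. - s k"] by (auto simp: idx_def)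
  then show "\<exists>r. \<forall>p\<in>idx l d. f p = (\<Sum>k\<in>{2..l}. r k * of_int (epsv d 1 p - epsv d k p))"
    by (rule exI[of _ "\<lambda>k. - s k"])
next
  assume "\<exists>r. \<forall>p\<in>idx l d. f p = (\<Sum>k\<in>{2..l}. r k * of_int (epsv d 1 p - epsv d k p))"
  then obtain r where r: "\<forall>p\<in>idx l d. f p = (\<Sum>k\<in>{2..l}. r k * of_int (epsv d 1 p - epsv d k p))" ..
  define s where "s i = (if i = 1 then (\<Sum>k\<in>{2..l}. r k) else - r i)" for i
  have "\<forall>i\<in>{1..l}. \<forall>j\<in>{1..d}. f (i, j) = s i"
    using r eps_diff_comb_apply[of _ l _ d r] by (simp add: s_def idx_iff)
  moreover have "(\<Sum>i\<in>{2..l}. s i) = - (\<Sum>k\<in>{2..l}. r k)"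
    by (simp add: s_def sum_negf)
  then have "(\<Sum>i\<in>{1..l}. s i) = 0"
    using sum_atLeast1_atMost_split[OF assms, of s] by (simp add: s_def)
  ultimately show "eps_span l d f" unfolding eps_span_def by blast
qed

lemma eps_span_add:
  assumes "eps_span l d f" "eps_span l d g"
  shows "eps_span l d (\<lambda>p. f p + g p)"
proof -
  obtain s t where "\<forall>i\<in>{1..l}. \<forall>j\<in>{1..d}. f (i, j) = s i" "(\<Sum>i\<in>{1..l}. s i) = 0"
    and "\<forall>i\<in>{1..l}. \<forall>j\<in>{1..d}. g (i, j) = t i" "(\<Sum>i\<in>{1..l}. t i) = 0"
    using assms by (auto simp: eps_span_def)
  then show ?thesis
    unfolding eps_span_def by (auto intro!: exI[of _ "\<lambda>i. s i + t i"] simp: sum.distrib)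
qed

lemma eps_span_uminus: "eps_span l d f \<Longrightarrow> eps_span l d (\<lambda>p. - f p)"
  unfolding eps_span_def by (metis (no_types, lifting) neg_equal_0_iff_equal sum_negf)

lemma eps_span_of_int: "eps_span l d f \<Longrightarrow> eps_span l d (\<lambda>p. of_int (f p))"
  unfolding eps_span_def by (metis (no_types, lifting) of_int_0 of_int_sum)

lemma Meq_iff_eps_span: "l \<ge> 1 \<Longrightarrow> Meq l d v w \<longleftrightarrow> eps_span l d (\<lambda>p. v p - w p)"
  by (simp add: Meq_def eps_span_iff_comb)

lemma Meq_cong: "(\<And>p. p \<in> idx l d \<Longrightarrow> v p - w p = v' p - w' p) \<Longrightarrow> Meq l d v w \<longleftrightarrow> Meq l d v' w'"
  by (simp add: Meq_def)

lemma Meq_refl: "Meq l d v v"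
  unfolding Meq_def by (rule exI[of _ "\<lambda>_. 0"]) simp

lemma Meq_sym: "l \<ge> 1 \<Longrightarrow> Meq l d v w \<Longrightarrow> Meq l d w v"
  using eps_span_uminus[of l d "\<lambda>p. v p - w p"] by (simp add: Meq_iff_eps_span)

lemma Meq_trans: "l \<ge> 1 \<Longrightarrow> Meq l d u v \<Longrightarrow> Meq l d v w \<Longrightarrow> Meq l d u w"
  using eps_span_add[of l d "\<lambda>p. u p - v p" "\<lambda>p. v p - w p"] by (simp add: Meq_iff_eps_span)

lemma degM_eq_if_Meq:
  assumes "l \<ge> 1" "Meq l d v w"
  shows "degM l d v = degM l d w"
proof -
  obtain s where s: "\<forall>i\<in>{1..l}. \<forall>j\<in>{1..d}. v (i, j) - w (i, j) = s i" "(\<Sum>i\<in>{1..l}. s i) = 0"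
    using assms by (auto simp: Meq_iff_eps_span eps_span_def)
  have "degM l d v - degM l d w = (\<Sum>i\<in>{1..l}. \<Sum>j\<in>{1..d}. s i)"
    unfolding degM_def sum_idx using s(1) by (simp add: sum_subtractf[symmetric])
  also have "\<dots> = int d * (\<Sum>i\<in>{1..l}. s i)"
    by (simp add: sum_distrib_left)
  finally show ?thesis using s(2) by simp
qed

lemma in_sigma_dual_iff_eps_span:
  "l \<ge> 1 \<Longrightarrow> in_sigma_dual l d w \<longleftrightarrow>
     (\<exists>c :: nat \<times> nat \<Rightarrow> real. (\<forall>p\<in>idx l d. 0 \<le> c p) \<and> eps_span l d (\<lambda>p. of_int (w p) - c p))"
  by (simp add: in_sigma_dual_def eps_span_iff_comb)

text \<open>The lattice points of \<open>\<sigma>\<^sup>\<or>\<close> are the classes of exponent vectors: a real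
  solution s of \<open>w\<^sub>i\<^sub>j \<ge> s\<^sub>i\<close>, \<open>\<Sum> s\<^sub>i = 0\<close> is rounded up, and the surplus
  \<open>\<Sum> \<lceil>s\<^sub>i\<rceil> \<ge> 0\<close> is taken off \<open>s\<^sub>1\<close>.\<close>
lemma in_sigma_dual_iff_Meq_exponent:
  assumes "l \<ge> 1"
  shows "in_sigma_dual l d w \<longleftrightarrow> (\<exists>a. (\<forall>p. p \<notin> idx l d \<longrightarrow> a p = 0) \<and> Meq l d w (\<lambda>p. int (a p)))"
proof
  assume "in_sigma_dual l d w"
  then obtain c s where c: "\<forall>p\<in>idx l d. 0 \<le> c p"
    and s: "\<forall>i\<in>{1..l}. \<forall>j\<in>{1..d}. of_int (w (i, j)) - c (i, j) = s i"
    and s0: "(\<Sum>i\<in>{1..l}. s i) = (0::real)"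
    by (auto simp: in_sigma_dual_iff_eps_span[OF assms] eps_span_def)
  define G where "G = (\<Sum>i\<in>{1..l}. \<lceil>s i\<rceil>)"
  have "0 \<le> real_of_int G"
    unfolding G_def of_int_sum s0[symmetric] by (intro sum_mono) simp
  then have G: "0 \<le> G" by simp
  define t where "t i = \<lceil>s i\<rceil> - (if i = 1 then G else 0)" for i
  have t0: "(\<Sum>i\<in>{1..l}. t i) = 0"
    using assms by (simp add: t_def sum_subtractf G_def)
  have t_le: "t i \<le> w (i, j)" if "i \<in> {1..l}" "j \<in> {1..d}" for i j
  proof -
    have "0 \<le> c (i, j)" "of_int (w (i, j)) - c (i, j) = s i"
      using c s that by (auto simp: idx_iff)
    then have "\<lceil>s i\<rceil> \<le> w (i, j)" by (simp add: ceiling_le_iff)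
    then show ?thesis using G by (auto simp: t_def)
  qed
  define a where "a p = (if p \<in> idx l d then nat (w p - t (fst p)) else 0)" for p
  have "Meq l d w (\<lambda>p. int (a p))"
    unfolding Meq_iff_eps_span[OF assms] eps_span_def
    using t_le t0 by (intro exI[of _ t]) (auto simp: a_def idx_iff)
  moreover have "\<forall>p. p \<notin> idx l d \<longrightarrow> a p = 0" by (simp add: a_def)
  ultimately show "\<exists>a. (\<forall>p. p \<notin> idx l d \<longrightarrow> a p = 0) \<and> Meq l d w (\<lambda>p. int (a p))"
    by blast
next
  assume "\<exists>a. (\<forall>p. p \<notin> idx l d \<longrightarrow> a p = 0) \<and> Meq l d w (\<lambda>p. int (a p))"
  then obtain a where "Meq l d w (\<lambda>p. int (a p))" by blast
  then have "eps_span l d (\<lambda>p. of_int (w p) - real (a p))"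
    using eps_span_of_int[of l d "\<lambda>p. w p - int (a p)"] by (simp add: Meq_iff_eps_span[OF assms])
  then show "in_sigma_dual l d w"
    unfolding in_sigma_dual_iff_eps_span[OF assms] by (intro exI[of _ "\<lambda>p. real (a p)"]) simp
qed

section \<open>Characters of the torus\<close>

lemma prod_power_int: "(\<Prod>i\<in>A. f i) powi n = (\<Prod>i\<in>A. f i powi n)"
  for f :: "'b \<Rightarrow> 'a::field"
  by (induction A rule: infinite_finite_induct) (auto simp: power_int_mult_distrib)

lemma power_int_sum: "x \<noteq> 0 \<Longrightarrow> x powi (\<Sum>i\<in>A. f i) = (\<Prod>i\<in>A. x powi f i)"
  for x :: "'a::field"
  by (induction A rule: infinite_finite_induct) (auto simp: power_int_add)

lemma power_int_two_eq_1: "(2::complex) powi n = 1 \<Longrightarrow> n = 0"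
proof -
  assume "(2::complex) powi n = 1"
  then have h: "(2::real) powi n = 1"
    by (metis of_real_1 of_real_eq_iff of_real_numeral of_real_power_int)
  then have "n \<le> 0" using power_int_le_imp_le_exp[of "2::real" n 0] by simp
  moreover have "- n \<le> 0"
    using h power_int_le_imp_le_exp[of "2::real" "- n" 0] by (simp add: power_int_minus)
  ultimately show "n = 0" by simp
qed

lemma prod_if_two_points:
  assumes "finite S" "x \<in> S" "y \<in> S" "x \<noteq> y"
  shows "(\<Prod>p\<in>S. if p = x then A else if p = y then B else 1) = A * (B::'a::comm_monoid_mult)"
proof -
  have "(\<Prod>p\<in>S. if p = x then A else if p = y then B else 1)
      = A * (\<Prod>p\<in>S - {x}. if p = y then B else 1)"
    using assms by (subst prod.remove[of S x]) (auto intro!: prod.cong)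
  also have "\<dots> = A * B" using assms by (simp add: prod.delta)
  finally show ?thesis .
qed

lemma Ttil_nonzero: "lam \<in> Ttil l d \<Longrightarrow> p \<in> idx l d \<Longrightarrow> lam p \<noteq> 0"
  by (simp add: Ttil_def)

lemma chi_nonzero: "lam \<in> Ttil l d \<Longrightarrow> chi l d v lam \<noteq> 0"
  by (simp add: chi_def finite_idx Ttil_nonzero power_int_not_zero)

lemma chi_diff:
  assumes "lam \<in> Ttil l d"
  shows "chi l d (\<lambda>p. v p - w p) lam = chi l d v lam / chi l d w lam"
proof -
  have "chi l d (\<lambda>p. v p - w p) lam = (\<Prod>p\<in>idx l d. lam p powi v p / lam p powi w p)"
    unfolding chi_def using assms by (intro prod.cong) (auto simp: power_int_diff Ttil_nonzero)
  then show ?thesis by (simp add: chi_def prod_dividef)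
qed

text \<open>The row products of \<open>\<lambda> \<in> T\<close> all agree, so the \<open>\<epsilon>\<^sub>i\<close> give one and the same
  character.\<close>
lemma chi_eq_1_if_eps_span:
  assumes "l \<ge> 1" "lam \<in> Ttil l d" "eps_span l d v"
  shows "chi l d v lam = 1"
proof -
  obtain s where s: "\<forall>i\<in>{1..l}. \<forall>j\<in>{1..d}. v (i, j) = s i" "(\<Sum>i\<in>{1..l}. s i) = 0"
    using assms(3) unfolding eps_span_def by blast
  define R where "R = (\<Prod>j\<in>{1..d}. lam (1, j))"
  have rows: "(\<Prod>j\<in>{1..d}. lam (i, j)) = R" if "i \<in> {1..l}" for i
    using assms(2) that unfolding Ttil_def R_def by blast
  have "R \<noteq> 0"
    unfolding R_def using assms(1,2) by (simp add: Ttil_nonzero idx_iff)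
  have "chi l d v lam = (\<Prod>i\<in>{1..l}. (\<Prod>j\<in>{1..d}. lam (i, j)) powi s i)"
    unfolding chi_def prod_idx prod_power_int using s(1) by (intro prod.cong) auto
  also have "\<dots> = R powi (\<Sum>i\<in>{1..l}. s i)"
    using rows \<open>R \<noteq> 0\<close> by (simp add: power_int_sum)
  finally show ?thesis using s(2) by simp
qed

text \<open>Test characters: \<open>\<lambda>\<close> equal to \<open>2, 1/2\<close> at two entries of a row and 1 elsewhere
  shows that v is constant along rows, and \<open>\<lambda>\<close> equal to 2 on the first column that the
  row values sum to 0.\<close>
lemma eps_span_if_chi_eq_1:
  assumes "d \<ge> 1" and chi1: "\<forall>lam \<in> Ttil l d. chi l d v lam = 1"
  shows "eps_span l d v"
proof -
  have row: "v (i, j) = v (i, j')" if ij: "i \<in> {1..l}" "j \<in> {1..d}" "j' \<in> {1..d}" "j \<noteq> j'" for i j j'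
  proof -
    define lam :: "nat \<times> nat \<Rightarrow> complex" where
      "lam p = (if p = (i, j) then 2 else if p = (i, j') then 1/2 else 1)" for p
    have rows: "(\<Prod>k\<in>{1..d}. lam (a, k)) = 1" for a
    proof (cases "a = i")
      case True
      then have "(\<Prod>k\<in>{1..d}. lam (a, k)) = (\<Prod>k\<in>{1..d}. if k = j then 2 else if k = j' then 1/2 else 1)"
        by (intro prod.cong) (auto simp: lam_def)
      also have "\<dots> = 2 * (1/2)" using ij by (intro prod_if_two_points) auto
      finally show ?thesis by simp
    qed (simp add: lam_def)
    have "\<forall>p. lam p \<noteq> 0" by (simp add: lam_def)
    then have "lam \<in> Ttil l d" unfolding Ttil_def using rows by fastforce
    then have "1 = (\<Prod>p\<in>idx l d. lam p powi v p)"
      using chi1 by (simp add: chi_def)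
    also have "\<dots> = (\<Prod>p\<in>idx l d. if p = (i, j) then 2 powi v (i, j)
                                   else if p = (i, j') then (1/2) powi v (i, j') else 1)"
      by (intro prod.cong) (auto simp: lam_def)
    also have "\<dots> = 2 powi v (i, j) * (1/2) powi v (i, j')"
      using ij by (intro prod_if_two_points) (auto simp: finite_idx idx_iff)
    also have "\<dots> = 2 powi (v (i, j) - v (i, j'))"
      by (simp add: power_int_diff power_int_divide_distrib)
    finally show ?thesis using power_int_two_eq_1 by force
  qed
  define lam :: "nat \<times> nat \<Rightarrow> complex" where "lam p = (if snd p = 1 then 2 else 1)" for p
  have "(\<Prod>k\<in>{1..d}. lam (a, k)) = 2" for a
    using assms(1) by (simp add: lam_def prod.delta)
  moreover have "\<forall>p. lam p \<noteq> 0" by (simp add: lam_def)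
  ultimately have "lam \<in> Ttil l d" unfolding Ttil_def by fastforce
  then have "1 = (\<Prod>p\<in>idx l d. lam p powi v p)"
    using chi1 by (simp add: chi_def)
  also have "\<dots> = (\<Prod>i\<in>{1..l}. \<Prod>j\<in>{1..d}. if j = 1 then 2 powi v (i, 1) else 1)"
    unfolding prod_idx by (intro prod.cong) (auto simp: lam_def)
  also have "\<dots> = (\<Prod>i\<in>{1..l}. 2 powi v (i, 1))"
    using assms(1) by (simp add: prod.delta)
  also have "\<dots> = 2 powi (\<Sum>i\<in>{1..l}. v (i, 1))"
    by (simp add: power_int_sum)
  finally have "(\<Sum>i\<in>{1..l}. v (i, 1)) = 0" using power_int_two_eq_1 by force
  moreover have "\<forall>i\<in>{1..l}. \<forall>j\<in>{1..d}. v (i, j) = v (i, 1)"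
    using row[of _ _ 1] assms(1) by fastforce
  ultimately show ?thesis unfolding eps_span_def by (intro exI[of _ "\<lambda>i. v (i, 1)"] conjI)
qed

lemma chi_eq_iff_Meq:
  assumes "l \<ge> 1" "d \<ge> 1"
  shows "(\<forall>lam \<in> Ttil l d. chi l d v lam = chi l d w lam) \<longleftrightarrow> Meq l d v w"
proof -
  have "(\<forall>lam \<in> Ttil l d. chi l d v lam = chi l d w lam)
      \<longleftrightarrow> (\<forall>lam \<in> Ttil l d. chi l d (\<lambda>p. v p - w p) lam = 1)"
    by (simp add: chi_diff chi_nonzero)
  also have "\<dots> \<longleftrightarrow> eps_span l d (\<lambda>p. v p - w p)"
    using chi_eq_1_if_eps_span[OF assms(1)] eps_span_if_chi_eq_1[OF assms(2)] by blast
  finally show ?thesis by (simp add: Meq_iff_eps_span[OF assms(1)])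
qed

section \<open>Weight spaces\<close>

text \<open>The weight of \<open>x\<^sup>a\<close>: the twist by \<open>1/(\<lambda>\<^sub>1\<^sub>1\<cdots>\<lambda>\<^sub>1\<^sub>d)\<close> in the action shifts the
  exponent by \<open>-\<epsilon>\<^sub>1\<close>.\<close>
definition mon_weight :: "nat \<Rightarrow> expo \<Rightarrow> nat \<times> nat \<Rightarrow> int" where
  "mon_weight d a p = int (a p) - epsv d 1 p"

lemma prod_row1_eq_chi_epsv:
  assumes "l \<ge> 1"
  shows "(\<Prod>j\<in>{1..d}. lam (1, j)) = chi l d (epsv d 1) lam"
proof -
  have "chi l d (epsv d 1) lam = (\<Prod>i\<in>{1..l}. if i = 1 then (\<Prod>j\<in>{1..d}. lam (i, j)) else 1)"
    unfolding chi_def prod_idx by (intro prod.cong) (auto simp: epsv_def)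
  then show ?thesis using assms by (simp add: prod.delta')
qed

lemma act_apply:
  assumes "l \<ge> 1" "lam \<in> Ttil l d"
  shows "act l d lam g a = chi l d (mon_weight d a) lam * g a"
proof -
  have "chi l d (mon_weight d a) lam = chi l d (\<lambda>p. int (a p)) lam / chi l d (epsv d 1) lam"
    unfolding mon_weight_def[abs_def] by (rule chi_diff[OF assms(2)])
  also have "\<dots> = (\<Prod>p\<in>idx l d. lam p ^ a p) / (\<Prod>j\<in>{1..d}. lam (1, j))"
    unfolding prod_row1_eq_chi_epsv[OF assms(1)] by (simp add: chi_def)
  finally show ?thesis by (simp add: act_def)
qed

definition rel_exps :: "nat \<Rightarrow> nat \<Rightarrow> expo set" where
  "rel_exps l d = {relexp d i j i' j' | i j i' j'.
                    i \<in> {1..l} \<and> j \<in> {1..d} \<and> i' \<in> {1..l} \<and> j' \<in> {1..d}}"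

definition weight_monomials :: "nat \<Rightarrow> nat \<Rightarrow> (nat \<times> nat \<Rightarrow> int) \<Rightarrow> expo set" where
  "weight_monomials l d u = {a \<in> mons l d - rel_exps l d. Meq l d (mon_weight d a) u}"

lemma relexp_mons:
  assumes "i \<in> {1..l}" "j \<in> {1..d}" "i' \<in> {1..l}" "j' \<in> {1..d}"
  shows "relexp d i j i' j' \<in> mons l d"
proof -
  have "{p \<in> idx l d. fst p = i \<and> snd p \<in> {1..d} - {j}} = {i} \<times> ({1..d} - {j})"
    using assms by (auto simp: idx_def)
  then have "(\<Sum>p\<in>idx l d. relexp d i j i' j' p) = 1 + card ({i} \<times> ({1..d} - {j}))"
    using assms unfolding relexp_def sum.distrib
    by (simp add: sum.If_cases finite_idx idx_iff Int_def conj_commute)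
  also have "\<dots> = d" using assms by simp
  finally show ?thesis
    using assms by (auto simp: mons_def relexp_def idx_iff)
qed

lemma rel_exps_subset_mons: "rel_exps l d \<subseteq> mons l d"
  by (auto simp: rel_exps_def intro: relexp_mons)

lemma finite_rel_exps: "finite (rel_exps l d)"
  using rel_exps_subset_mons finite_mons by (rule finite_subset)

lemma finite_weight_monomials: "finite (weight_monomials l d u)"
  unfolding weight_monomials_def by (rule finite_subset[OF _ finite_mons]) blast

lemma Rel_eq: "Rel l d = supported_on (rel_exps l d)"
proof -
  have "{monomial (relexp d i j i' j') | i j i' j'.
          i \<in> {1..l} \<and> j \<in> {1..d} \<and> i' \<in> {1..l} \<and> j' \<in> {1..d}} = monomial ` rel_exps l d"
    unfolding rel_exps_def by blast
  then show ?thesis by (simp add: Rel_def span_monomials[OF finite_rel_exps])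
qed

text \<open>The action is diagonal in the monomial basis and Rel is spanned by monomials.\<close>
lemma wpre_eq:
  assumes "l \<ge> 1" "d \<ge> 1"
  shows "wpre l d u = supported_on (rel_exps l d \<union> weight_monomials l d u)"
proof -
  have "g \<in> wpre l d u \<longleftrightarrow> g \<in> supported_on (rel_exps l d \<union> weight_monomials l d u)" for g
  proof -
    have "g \<in> wpre l d u \<longleftrightarrow> g \<in> Pd l d \<and> (\<forall>lam\<in>Ttil l d. \<forall>a. a \<notin> rel_exps l d \<longrightarrow>
            (chi l d (mon_weight d a) lam - chi l d u lam) * g a = 0)"
      by (auto simp: wpre_def Rel_eq supported_on_def act_apply[OF assms(1)] sc_def
          algebra_simps)
    also have "\<dots> \<longleftrightarrow> g \<in> Pd l d \<and> (\<forall>a. a \<notin> rel_exps l d \<longrightarrow> g a \<noteq> 0 \<longrightarrow>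
            (\<forall>lam\<in>Ttil l d. chi l d (mon_weight d a) lam = chi l d u lam))"
      by auto
    also have "\<dots> \<longleftrightarrow> g \<in> supported_on (rel_exps l d \<union> weight_monomials l d u)"
      using rel_exps_subset_mons
      by (auto simp: chi_eq_iff_Meq[OF assms] Pd_def supported_on_def weight_monomials_def)
    finally show ?thesis .
  qed
  then show ?thesis by blast
qed

lemma dimT1w_eq_card:
  assumes "l \<ge> 1" "d \<ge> 1"
  shows "dimT1w l d u = card (weight_monomials l d u)"
proof -
  have "dimT1w l d u = card (rel_exps l d \<union> weight_monomials l d u) - card (rel_exps l d)"
    by (simp add: dimT1w_def wpre_eq[OF assms] Rel_eq dim_supported_on finite_rel_exps
        finite_weight_monomials)
  also have "\<dots> = card (weight_monomials l d u)"
    using finite_rel_exps finite_weight_monomials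
    by (subst card_Un_disjoint) (auto simp: weight_monomials_def)
  finally show ?thesis .
qed

section \<open>Monomials of a given weight\<close>

lemma Meq_mon_weight_relexp:
  assumes "l \<ge> 1" "i \<in> {1..l}" "j \<in> {1..d}" "i' \<in> {1..l}" "j' \<in> {1..d}"
  shows "Meq l d (mon_weight d (relexp d i j i' j')) (\<lambda>p. ebas i' j' p - ebas i j p)"
proof -
  define s where "s k = (if k = i then 1 else 0) - (if k = 1 then 1 else (0::int))" for k
  have "\<forall>a\<in>{1..l}. \<forall>b\<in>{1..d}.
          mon_weight d (relexp d i j i' j') (a, b) - (ebas i' j' (a, b) - ebas i j (a, b)) = s a"
    by (auto simp: mon_weight_def relexp_def epsv_def ebas_def s_def)
  moreover have "(\<Sum>k\<in>{1..l}. s k) = 0"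
    using assms by (simp add: s_def sum_subtractf)
  ultimately show ?thesis
    unfolding Meq_iff_eps_span[OF assms(1)] eps_span_def by blast
qed

lemma Meq_mon_weight_iff:
  assumes "l \<ge> 1"
  shows "Meq l d (mon_weight d a) u \<longleftrightarrow> Meq l d (\<lambda>p. u p + epsv d 1 p) (\<lambda>p. int (a p))"
proof -
  have "Meq l d (mon_weight d a) u \<longleftrightarrow> Meq l d (\<lambda>p. int (a p)) (\<lambda>p. u p + epsv d 1 p)"
    by (rule Meq_cong) (simp add: mon_weight_def)
  then show ?thesis using Meq_sym[OF assms] by blast
qed

text \<open>For degree reasons such a monomial is \<open>x\<^sub>i\<^sub>1\<cdots>x\<^sub>i\<^sub>d\<close> itself, the relation
  monomial with \<open>(i', j') = (i, j) = (i, 1)\<close>.\<close>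
lemma row_divisible_in_rel_exps:
  assumes "i \<in> {1..l}" "d \<ge> 1" "a \<in> mons l d" and row: "\<forall>j\<in>{1..d}. 1 \<le> a (i, j)"
  shows "a \<in> rel_exps l d"
proof -
  let ?e = "relexp d i 1 i 1"
  have e: "?e \<in> mons l d" using assms(1,2) by (intro relexp_mons) auto
  have "?e p \<le> a p" if "p \<in> idx l d" for p
    using that row by (cases p) (auto simp: relexp_def idx_iff)
  then have "a p = ?e p" if "p \<in> idx l d" for p
    using sum_mono_inv[of ?e "idx l d" a p] e assms(3) that finite_idx by (simp add: mons_def)
  moreover have "a p = ?e p" if "p \<notin> idx l d" for p
    using e assms(3) that unfolding mons_def by (cases p) auto
  ultimately have "a = ?e" by blast
  then show ?thesis using assms(1,2) unfolding rel_exps_def by fastforce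
qed

text \<open>Two monomials of the same degree differ by \<open>\<Sum> s\<^sub>i \<epsilon>\<^sub>i\<close> with \<open>\<Sum> s\<^sub>i = 0\<close>; if they are
  distinct, some \<open>s\<^sub>i > 0\<close>, and the first one is divisible by \<open>x\<^sub>i\<^sub>1\<cdots>x\<^sub>i\<^sub>d\<close>.\<close>
lemma Meq_distinct_mons_in_rel_exps:
  assumes "l \<ge> 1" "d \<ge> 1" "a \<in> mons l d" "b \<in> mons l d" "a \<noteq> b"
    and "Meq l d (\<lambda>p. int (a p)) (\<lambda>p. int (b p))"
  shows "a \<in> rel_exps l d"
proof -
  obtain s where s: "\<forall>i\<in>{1..l}. \<forall>j\<in>{1..d}. int (a (i, j)) - int (b (i, j)) = s i"
    and s0: "(\<Sum>i\<in>{1..l}. s i) = 0"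
    using assms(6) unfolding Meq_iff_eps_span[OF assms(1)] eps_span_def by blast
  have "\<exists>i\<in>{1..l}. s i > 0"
  proof (rule ccontr)
    assume "\<not> (\<exists>i\<in>{1..l}. s i > 0)"
    then have "\<forall>i\<in>{1..l}. s i = 0"
      using s0 sum_nonneg_eq_0_iff[of "{1..l}" "\<lambda>i. - s i"] by (force simp: sum_negf)
    then have "a (x, y) = b (x, y)" for x y
      using s assms(3,4) by (cases "(x, y) \<in> idx l d") (auto simp: mons_def idx_iff)
    then show False using assms(5) by auto
  qed
  then obtain i where i: "i \<in> {1..l}" "s i > 0" by blast
  then have "\<forall>j\<in>{1..d}. 1 \<le> a (i, j)" using s by fastforce
  then show ?thesis using row_divisible_in_rel_exps[OF i(1) assms(2,3)] by blast
qed

lemma weight_monomials_unique: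
  assumes "l \<ge> 1" "d \<ge> 1" "a \<in> weight_monomials l d u" "b \<in> weight_monomials l d u"
  shows "a = b"
proof (rule ccontr)
  assume "a \<noteq> b"
  have "Meq l d (mon_weight d a) u" "Meq l d (mon_weight d b) u"
    using assms(3,4) by (simp_all add: weight_monomials_def)
  then have "Meq l d (mon_weight d a) (mon_weight d b)"
    using Meq_trans[OF assms(1)] Meq_sym[OF assms(1)] by blast
  then have "Meq l d (\<lambda>p. int (a p)) (\<lambda>p. int (b p))"
    by (subst Meq_cong) (auto simp: mon_weight_def)
  then have "a \<in> rel_exps l d"
    using Meq_distinct_mons_in_rel_exps[OF assms(1,2) _ _ \<open>a \<noteq> b\<close>] assms(3,4)
    by (auto simp: weight_monomials_def)
  then show False using assms(3) by (simp add: weight_monomials_def)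
qed

lemma weight_monomials_empty_if_relexp_weight:
  assumes "l \<ge> 1" "d \<ge> 1" "i \<in> {1..l}" "j \<in> {1..d}" "i' \<in> {1..l}" "j' \<in> {1..d}"
    and "Meq l d (mon_weight d (relexp d i j i' j')) u"
  shows "weight_monomials l d u = {}"
proof (rule ccontr)
  let ?r = "relexp d i j i' j'"
  assume "weight_monomials l d u \<noteq> {}"
  then obtain a where a: "a \<in> mons l d" "a \<notin> rel_exps l d" "Meq l d (mon_weight d a) u"
    by (auto simp: weight_monomials_def)
  have r: "?r \<in> mons l d" "?r \<in> rel_exps l d"
    using assms(3-6) by (auto simp: rel_exps_def intro: relexp_mons)
  have "Meq l d (mon_weight d a) (mon_weight d ?r)"
    using Meq_trans[OF assms(1) a(3) Meq_sym[OF assms(1) assms(7)]] .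
  then have "Meq l d (\<lambda>p. int (a p)) (\<lambda>p. int (?r p))"
    by (subst Meq_cong) (auto simp: mon_weight_def)
  then show False
    using Meq_distinct_mons_in_rel_exps[OF assms(1,2) a(1) r(1)] a(2) r(2) by blast
qed

lemma sum_epsv: "l \<ge> 1 \<Longrightarrow> (\<Sum>p\<in>idx l d. epsv d 1 p) = int d"
  by (simp add: sum_idx epsv_def if_distrib[where f = "\<lambda>x. int d * x"] sum.delta cong: if_cong)

lemma mon_weight_Zvec: "l \<ge> 1 \<Longrightarrow> a \<in> mons l d \<Longrightarrow> mon_weight d a \<in> Zvec l d"
  by (auto simp: Zvec_def mon_weight_def mons_def epsv_def idx_def)

lemma degM_mon_weight: "l \<ge> 1 \<Longrightarrow> a \<in> mons l d \<Longrightarrow> degM l d (mon_weight d a) = 0"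
  using sum_epsv[of l d] by (simp add: degM_def mon_weight_def sum_subtractf mons_def flip: of_nat_sum)

lemma mon_of_weight_if_inPsi:
  assumes "l \<ge> 1" "inPsi l d u"
  obtains a where "a \<in> mons l d" "Meq l d (mon_weight d a) u"
proof -
  obtain a where a0: "\<forall>p. p \<notin> idx l d \<longrightarrow> a p = 0"
    and a: "Meq l d (\<lambda>p. u p + epsv d 1 p) (\<lambda>p. int (a p))"
    using assms(2) by (auto simp: inPsi_def in_sigma_dual_iff_Meq_exponent[OF assms(1)])
  have "int (\<Sum>p\<in>idx l d. a p) = degM l d (\<lambda>p. u p + epsv d 1 p)"
    using degM_eq_if_Meq[OF assms(1) a] by (simp add: degM_def)
  also have "\<dots> = int d"
    using assms(2) sum_epsv[OF assms(1)] by (simp add: inPsi_def degM_def sum.distrib)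
  finally have "a \<in> mons l d" using a0 by (simp add: mons_def flip: of_nat_sum)
  then show ?thesis using a that by (simp add: Meq_mon_weight_iff[OF assms(1)])
qed

lemma inPhi_iff_weight_monomials_nonempty:
  assumes "l \<ge> 1" "d \<ge> 1" "u \<in> Zvec l d" "degM l d u = 0"
  shows "inPhi l d u \<longleftrightarrow> weight_monomials l d u \<noteq> {}"
proof
  assume Phi: "inPhi l d u"
  then obtain a where a: "a \<in> mons l d" "Meq l d (mon_weight d a) u"
    using mon_of_weight_if_inPsi[OF assms(1)] by (auto simp: inPhi_def)
  moreover have "a \<notin> rel_exps l d"
  proof
    assume "a \<in> rel_exps l d"
    then obtain i j i' j' where ij: "i \<in> {1..l}" "j \<in> {1..d}" "i' \<in> {1..l}" "j' \<in> {1..d}"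
      and "a = relexp d i j i' j'" unfolding rel_exps_def by blast
    then have "Meq l d u (\<lambda>p. ebas i' j' p - ebas i j p)"
      using a(2) Meq_mon_weight_relexp[OF assms(1) ij] Meq_trans[OF assms(1)] Meq_sym[OF assms(1)]
      by metis
    then show False using Phi ij by (auto simp: inPhi_def)
  qed
  ultimately show "weight_monomials l d u \<noteq> {}"
    using a by (auto simp: weight_monomials_def)
next
  assume "weight_monomials l d u \<noteq> {}"
  then obtain a where a: "a \<in> mons l d" "Meq l d (mon_weight d a) u"
    by (auto simp: weight_monomials_def)
  then have "in_sigma_dual l d (\<lambda>p. u p + epsv d 1 p)"
    by (auto simp: in_sigma_dual_iff_Meq_exponent[OF assms(1)] mons_def
        Meq_mon_weight_iff[OF assms(1)])
  moreover have "\<not> Meq l d u (\<lambda>p. ebas i j p - ebas i' j' p)"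
    if ij: "i \<in> {1..l}" "j \<in> {1..d}" "i' \<in> {1..l}" "j' \<in> {1..d}" for i j i' j'
  proof
    assume "Meq l d u (\<lambda>p. ebas i j p - ebas i' j' p)"
    then have "Meq l d (mon_weight d (relexp d i' j' i j)) u"
      using Meq_mon_weight_relexp[OF assms(1) ij(3,4,1,2)] Meq_trans[OF assms(1)]
        Meq_sym[OF assms(1)] by blast
    then show False
      using weight_monomials_empty_if_relexp_weight[OF assms(1,2) ij(3,4,1,2)]
        \<open>weight_monomials l d u \<noteq> {}\<close> by blast
  qed
  ultimately show "inPhi l d u"
    using assms(3,4) by (auto simp: inPhi_def inPsi_def)
qed

lemma card_weight_monomials:
  assumes "l \<ge> 1" "d \<ge> 1" "u \<in> Zvec l d" "degM l d u = 0"
  shows "card (weight_monomials l d u) = (if inPhi l d u then 1 else 0)"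
proof (cases "inPhi l d u")
  case True
  then obtain a where "a \<in> weight_monomials l d u"
    using inPhi_iff_weight_monomials_nonempty[OF assms] by blast
  then have "weight_monomials l d u = {a}"
    using weight_monomials_unique[OF assms(1,2)] by blast
  then show ?thesis using True by simp
next
  case False
  then show ?thesis using inPhi_iff_weight_monomials_nonempty[OF assms] by simp
qed

text \<open>A monomial outside Rel lies in the weight space of its own weight.\<close>
lemma span_Rel_weight_spaces:
  assumes "l \<ge> 1" "d \<ge> 1"
  shows "vs.span (Rel l d \<union> (\<Union>u \<in> {u. inPhi l d u}. wpre l d u)) = Pd l d"
    (is "vs.span ?S = _")
proof
  have "?S \<subseteq> Pd l d"
    using rel_exps_subset_mons by (auto simp: Rel_eq Pd_eq supported_on_def wpre_def)
  then show "vs.span ?S \<subseteq> Pd l d"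
    by (rule vs.span_minimal) (simp add: Pd_eq subspace_supported_on)
next
  have "monomial a \<in> ?S" if a: "a \<in> mons l d" for a
  proof (cases "a \<in> rel_exps l d")
    case True
    then show ?thesis by (auto simp: Rel_eq supported_on_def monomial_def)
  next
    case False
    let ?u = "mon_weight d a"
    have "a \<in> weight_monomials l d ?u"
      using a False Meq_refl by (simp add: weight_monomials_def)
    then have "inPhi l d ?u" "monomial a \<in> wpre l d ?u"
      using inPhi_iff_weight_monomials_nonempty[OF assms mon_weight_Zvec[OF assms(1) a]
          degM_mon_weight[OF assms(1) a]]
      by (auto simp: wpre_eq[OF assms] supported_on_def monomial_def)
    then show ?thesis by blast
  qed
  then have "vs.span (monomial ` mons l d) \<subseteq> vs.span ?S"
    by (intro vs.span_mono) blast
  then show "Pd l d \<subseteq> vs.span ?S"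
    by (simp add: Pd_eq span_monomials[OF finite_mons])
qed

theorem mainTheorem18:
  fixes l d :: nat
  assumes "l \<ge> 2" and "d \<ge> 2"
  shows "(\<forall>u \<in> Zvec l d. degM l d u = 0 \<longrightarrow>
            dimT1w l d u = (if inPhi l d u then 1 else 0))
       \<and> module.span sc (Rel l d \<union> (\<Union>u \<in> {u. inPhi l d u}. wpre l d u)) = Pd l d"
proof -
  have l: "l \<ge> 1" and d: "d \<ge> 1" using assms by simp_all
  show ?thesis
    using dimT1w_eq_card[OF l d] card_weight_monomials[OF l d] span_Rel_weight_spaces[OF l d]
    by simp
qed

end
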